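(* Let $R\subseteq\mathbb N$ be a congruence-periodic sparse predicate, $d\in\mathbb N^+$, $\tilde R\subseteq^dR$, $n\in\mathbb N^+$, $\mathbf A$ an $n$-tuple of operators all $\neq_R0$, and $\Delta\in d\mathbb N$ sufficiently large. Then there is $\Lambda\in\mathbb N$ such that the following holds: for all $s,t,x\in\mathbb Z$ with $s\le t<x-\min\mathbf A\cdot\tilde R^n_\Delta$ if $A_1>_R0$ (respectively $s\ge t>x-\max\mathbf A\cdot\tilde R^n_\Delta$ if $A_1<_R0$), either (i) $P^1_\Delta(x-s;\mathbf A,\tilde R)=\sigma^\delta P^1_\Delta(x-t;\mathbf A,\tilde R)$ for some $0\le\delta\le\Lambda$, or (ii) $P^1_\Delta(x-s;\mathbf A,\tilde R)=\sigma^\varepsilon P^1_\Delta(t-s;\mathbf A,\tilde R)$ for some $0\le\varepsilon\le\Lambda$.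
   Context: Let $R\subseteq\mathbb N$ be infinite, enumerated increasingly as $(r_n)$; $\sigma:R\to R$ is the successor map, $\sigma^k$ its iterate ($\sigma^0=\mathrm{id}$). An operator on $R$ is $z\mapsto\sum_{i=0}^ma_i\sigma^i(z)$, $a_i\in\mathbb Z$. $A=_R0$: $Az=0$ for all $z\in R$; $A>_R0$ (resp. $<_R0$): $Az>0$ (resp. $<0$) for cofinitely many $z$. $R$ sparse: every operator satisfies (S1) $A=_R0$ or $A>_R0$ or $A<_R0$; (S2) if $A>_R0$ there is $\Delta$ with $A(\sigma^\Delta z)>z$ for all $z$. Congruence-periodic: $(r_n\bmod m)$ eventually periodic for each $m\ge1$. $\tilde R\subseteq^dR$: $\tilde R=\{r_{N+dt}:t\in\mathbb N\}$ for some $N$. $\mathbf A\cdot z=\sum A_iz_i$, $\mathbf A\cdot S=\{\mathbf A\cdot z:z\in S\}$. $\tilde R^n_\Delta=\{z\in\tilde R^n:z_i\ge\sigma^\Delta z_{i+1}\ (1\le i\le n)\}$, $z_{n+1}:=\min\tilde R$. For $\mathbf A$ with entries $\neq_R0$ and $\Delta$ large enough that $z\mapsto\mathbf A\cdot z$ is injective on $R^n_\Delta$, $P_\Delta(x;\mathbf A,\tilde R)$ is the $z\in\tilde R^n_\Delta$ with largest $\mathbf A\cdot z$ subject to $\mathbf A\cdot z<x$ if $x>\inf\mathbf A\cdot\tilde R^n_\Delta$, and otherwise the $z\in\tilde R^n_\Delta$ minimising $\mathbf A\cdot z$; $P^1_\Delta$ is its first coordinate. "$\Delta\in d\mathbb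 N$ sufficiently large" means $\Delta\ge\Delta_0$ for some suitable $\Delta_0$. *)

theory Defs
  imports Main "HOL-Library.Infinite_Set"
begin

definition succR :: "nat set \<Rightarrow> nat \<Rightarrow> nat" where
  "succR R z = (LEAST y. y \<in> R \<and> z < y)"

definition opApp :: "nat set \<Rightarrow> int list \<Rightarrow> nat \<Rightarrow> int" where
  "opApp R A z = (\<Sum>i<length A. A ! i * int ((succR R ^^ i) z))"

definition opZero :: "nat set \<Rightarrow> int list \<Rightarrow> bool" where
  "opZero R A \<longleftrightarrow> (\<forall>z\<in>R. opApp R A z = 0)"

definition opPos :: "nat set \<Rightarrow> int list \<Rightarrow> bool" where
  "opPos R A \<longleftrightarrow> finite {z\<in>R. \<not> (opApp R A z > 0)}"

definition opNeg :: "nat set \<Rightarrow> int list \<Rightarrow> bool" where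
  "opNeg R A \<longleftrightarrow> finite {z\<in>R. \<not> (opApp R A z < 0)}"

definition sparse :: "nat set \<Rightarrow> bool" where
  "sparse R \<longleftrightarrow> (\<forall>A. (opZero R A \<or> opPos R A \<or> opNeg R A) \<and>
     (opPos R A \<longrightarrow> (\<exists>D. \<forall>z\<in>R. opApp R A ((succR R ^^ D) z) > int z)))"

definition cong_periodic :: "nat set \<Rightarrow> bool" where
  "cong_periodic R \<longleftrightarrow> (\<forall>m\<ge>1. \<exists>N p. p > 0 \<and>
     (\<forall>k\<ge>N. enumerate R (k + p) mod m = enumerate R k mod m))"

definition sub_d :: "nat set \<Rightarrow> nat \<Rightarrow> nat set \<Rightarrow> bool" where
  "sub_d Rt d R \<longleftrightarrow> (\<exists>N. Rt = {enumerate R (N + d * t) | t. True})"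

definition dotA :: "nat set \<Rightarrow> int list list \<Rightarrow> nat list \<Rightarrow> int" where
  "dotA R As z = (\<Sum>i<length As. opApp R (As ! i) (z ! i))"

text \<open>The set tilde R^n_Delta; tuples are lists of length n (index 0 = first
  coordinate), sigma is the successor on R, z_{n+1} := min Rt.\<close>
definition tupSet :: "nat set \<Rightarrow> nat set \<Rightarrow> nat \<Rightarrow> nat \<Rightarrow> nat list set" where
  "tupSet R Rt n D = {z. length z = n \<and> (\<forall>i<n. z ! i \<in> Rt) \<and>
     (\<forall>i<n. z ! i \<ge> (succR R ^^ D) (if Suc i < n then z ! Suc i else Min Rt))}"

definition Pdelta :: "nat set \<Rightarrow> nat set \<Rightarrow> int list list \<Rightarrow> nat \<Rightarrow> int \<Rightarrow> nat list" where
  "Pdelta R Rt As D x =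
    (let S = tupSet R Rt (length As) D in
     if (\<exists>w\<in>S. dotA R As w < x)
     then (THE z. z \<in> S \<and> dotA R As z < x \<and>
                 (\<forall>w\<in>S. dotA R As w < x \<longrightarrow> dotA R As w \<le> dotA R As z))
     else (THE z. z \<in> S \<and> (\<forall>w\<in>S. dotA R As z \<le> dotA R As w)))"

definition P1delta :: "nat set \<Rightarrow> nat set \<Rightarrow> int list list \<Rightarrow> nat \<Rightarrow> int \<Rightarrow> nat" where
  "P1delta R Rt As D x = hd (Pdelta R Rt As D x)"

end

theory Submission
  imports Defs
begin

text \<open>For large D the value A.z of a tuple z is decided lexicographically: the change of
  a single coordinate outweighs everything the later coordinates, which lie at least D
  successor steps lower, can contribute. This rests on sparseness, through (S2) applied to
  difference operators. Hence A.z is strictly monotone in the head z_1 and lies between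
  A_1(z_1)/2 and 3 A_1(z_1)/2 (up to the sign of A_1). As x - s = (x - t) + (t - s), the head
  of P(x - s) lies above the larger head M of P(x - t) and P(t - s), while the value
  x - s is bounded by a constant multiple of A_1 evaluated a bounded number of steps above M;
  since A_1 outgrows any constant multiple of itself after boundedly many steps, the head
  of P(x - s) is a bounded number of successor steps above M.\<close>

lemma succR_le: "y \<in> R \<Longrightarrow> x < y \<Longrightarrow> succR R x \<le> y"
  unfolding succR_def by (simp add: Least_le)

locale infinite_pred =
  fixes R :: "nat set"
  assumes infinite_R: "infinite R"
begin

abbreviation \<sigma> :: "nat \<Rightarrow> nat \<Rightarrow> nat" where
  "\<sigma> k \<equiv> succR R ^^ k"

lemma succR_mem_gt: "succR R x \<in> R \<and> x < succR R x"
proof -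
  obtain y where "y \<in> R" "x < y"
    using infinite_R unfolding infinite_nat_iff_unbounded by blast
  then show ?thesis
    unfolding succR_def by (rule LeastI[of "\<lambda>y. y \<in> R \<and> x < y", OF conjI])
qed

lemma succR_mono: "x \<le> y \<Longrightarrow> succR R x \<le> succR R y"
  by (meson le_less_trans succR_mem_gt succR_le)

lemma succR_le_cancel: "x \<in> R \<Longrightarrow> succR R x \<le> succR R y \<Longrightarrow> x \<le> y"
  by (meson leD le_less_trans linorder_le_less_linear succR_le succR_mem_gt)

lemma sigma_mem: "x \<in> R \<Longrightarrow> \<sigma> k x \<in> R"
  by (induct k) (auto simp: succR_mem_gt)

lemma sigma_pos_mem: "0 < k \<Longrightarrow> \<sigma> k x \<in> R"
  using succR_mem_gt by (cases k) auto

lemma sigma_ge_add: "x + k \<le> \<sigma> k x"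
proof (induct k)
  case (Suc k)
  then show ?case using succR_mem_gt[of "\<sigma> k x"] by simp
qed simp

lemma sigma_mono: "x \<le> y \<Longrightarrow> \<sigma> k x \<le> \<sigma> k y"
  by (induct k) (auto simp: succR_mono)

lemma sigma_mono_iter: "a \<le> b \<Longrightarrow> \<sigma> a x \<le> \<sigma> b x"
proof -
  assume "a \<le> b"
  then have "\<sigma> b x = \<sigma> (b - a) (\<sigma> a x)"
    by (metis funpow_add le_add_diff_inverse2 o_apply)
  then show ?thesis using sigma_ge_add[of "\<sigma> a x" "b - a"] by simp
qed

lemma sigma_strict_mono_iter: "a < b \<Longrightarrow> \<sigma> a x < \<sigma> b x"
  using succR_mem_gt[of "\<sigma> a x"] sigma_mono_iter[of "Suc a" b x] by simp

lemma sigma_reaches: "u \<in> R \<Longrightarrow> v \<in> R \<Longrightarrow> u \<le> v \<Longrightarrow> \<exists>k. v = \<sigma> k u"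
proof (induct "v - u" arbitrary: u rule: less_induct)
  case less
  show ?case
  proof (cases "u = v")
    case True
    then show ?thesis by (metis funpow_0)
  next
    case False
    then have "u < v" using less.prems by simp
    then have "succR R u \<in> R" "u < succR R u" "succR R u \<le> v"
      using succR_mem_gt succR_le less.prems by auto
    then obtain k where "v = \<sigma> k (succR R u)"
      using less.hyps[of "succR R u"] less.prems by force
    then have "v = \<sigma> (Suc k) u" by (simp add: funpow_Suc_right del: funpow.simps)
    then show ?thesis by blast
  qed
qed

lemma sigma_reaches_within:
  assumes "u \<in> R" "v \<in> R" "u \<le> v" "v \<le> \<sigma> J u"
  shows "\<exists>k\<le>J. v = \<sigma> k u"
proof -
  obtain k where k: "v = \<sigma> k u" using sigma_reaches assms(1-3) by blast
  then have "k \<le> J" using sigma_strict_mono_iter[of J k u] assms(4) by (meson leD leI)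
  with k show ?thesis by blast
qed

lemma sigma_enumerate: "\<sigma> j (enumerate R k) = enumerate R (k + j)"
  by (induct j) (auto simp: succR_def enumerate_Suc'' infinite_R)

end

definition coef_or_0 :: "int list \<Rightarrow> nat \<Rightarrow> int" where
  "coef_or_0 A i = (if i < length A then A ! i else 0)"

lemma opApp_pad:
  assumes "length A \<le> K"
  shows "opApp R A z = (\<Sum>i<K. coef_or_0 A i * int ((succR R ^^ i) z))"
  unfolding opApp_def using assms
  by (intro sum.mono_neutral_cong_left) (auto simp: coef_or_0_def)

lemma opApp_lin_comb: "\<exists>L. \<forall>z. opApp R L z = a * opApp R A z + b * opApp R B z"
proof -
  define K where "K = max (length A) (length B)"
  define L where "L = map (\<lambda>i. a * coef_or_0 A i + b * coef_or_0 B i) [0..<K]"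
  have "opApp R L z = a * opApp R A z + b * opApp R B z" for z
  proof -
    have "opApp R L z = (\<Sum>i<K. (a * coef_or_0 A i + b * coef_or_0 B i) * int ((succR R ^^ i) z))"
      unfolding L_def opApp_def by (intro sum.cong) auto
    also have "\<dots> = a * (\<Sum>i<K. coef_or_0 A i * int ((succR R ^^ i) z))
                    + b * (\<Sum>i<K. coef_or_0 B i * int ((succR R ^^ i) z))"
      by (simp add: sum_distrib_left sum.distrib algebra_simps)
    also have "\<dots> = a * opApp R A z + b * opApp R B z"
      using opApp_pad[of A K] opApp_pad[of B K] by (simp add: K_def)
    finally show ?thesis .
  qed
  then show ?thesis by blast
qed

lemma opApp_Cons_0: "opApp R (0 # A) z = opApp R A (succR R z)"
proof -
  have "opApp R (0 # A) z = (\<Sum>i<Suc (length A). (0 # A) ! i * int ((succR R ^^ i) z))"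
    unfolding opApp_def by simp
  also have "\<dots> = opApp R A (succR R z)"
    unfolding opApp_def sum.lessThan_Suc_shift by (simp add: funpow_Suc_right del: funpow.simps)
  finally show ?thesis .
qed

lemma ex_difference_op: "\<exists>L. \<forall>z. opApp R L z = opApp R B (succR R z) - opApp R B z"
  using opApp_lin_comb[of R 1 "0 # B" "-1" B] by (simp add: opApp_Cons_0)

lemma opApp_uminus: "opApp R (map uminus A) z = - opApp R A z"
  unfolding opApp_def by (simp add: sum_negf)

lemma opPos_uminus_iff: "opPos R (map uminus A) \<longleftrightarrow> opNeg R A"
  unfolding opPos_def opNeg_def by (simp add: opApp_uminus)

lemma opPos_eventually: "opPos R A \<Longrightarrow> \<exists>T. \<forall>z\<in>R. T \<le> z \<longrightarrow> opApp R A z > 0"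
  unfolding opPos_def by (metis (mono_tags, lifting) finite_nat_set_iff_bounded_le mem_Collect_eq not_less_eq_eq)

lemma opNeg_eventually: "opNeg R A \<Longrightarrow> \<exists>T. \<forall>z\<in>R. T \<le> z \<longrightarrow> opApp R A z < 0"
  using opPos_eventually[of R "map uminus A"] by (simp add: opPos_uminus_iff opApp_uminus)

definition op_sign :: "nat set \<Rightarrow> int list \<Rightarrow> int" where
  "op_sign R A = (if opPos R A then 1 else -1)"

definition abs_op :: "nat set \<Rightarrow> int list \<Rightarrow> int list" where
  "abs_op R A = (if opPos R A then A else map uminus A)"

lemma opApp_abs_op: "opApp R (abs_op R A) z = op_sign R A * opApp R A z"
  unfolding abs_op_def op_sign_def by (simp add: opApp_uminus)

definition coef_norm :: "int list \<Rightarrow> nat" where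
  "coef_norm A = (\<Sum>i<length A. nat \<bar>A ! i\<bar>)"

context infinite_pred
begin

lemma not_opPos_and_opNeg: "\<not> (opPos R A \<and> opNeg R A)"
proof
  assume "opPos R A \<and> opNeg R A"
  then obtain T1 T2 where "\<forall>z\<in>R. T1 \<le> z \<longrightarrow> opApp R A z > 0" "\<forall>z\<in>R. T2 \<le> z \<longrightarrow> opApp R A z < 0"
    using opPos_eventually opNeg_eventually by metis
  moreover obtain z where "z \<in> R" "max T1 T2 \<le> z"
    using infinite_R unfolding infinite_nat_iff_unbounded_le by blast
  ultimately show False by force
qed

lemma opApp_abs_le:
  assumes "length A \<le> m"
  shows "\<bar>opApp R A z\<bar> \<le> int (coef_norm A) * int (\<sigma> m z)"
proof -
  have "\<bar>opApp R A z\<bar> \<le> (\<Sum>i<length A. \<bar>A ! i\<bar> * int (\<sigma> i z))"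
    unfolding opApp_def by (rule order_trans[OF sum_abs]) (simp add: abs_mult)
  also have "\<dots> \<le> (\<Sum>i<length A. \<bar>A ! i\<bar> * int (\<sigma> m z))"
    using assms by (intro sum_mono mult_left_mono) (auto intro: sigma_mono_iter)
  also have "\<dots> = int (coef_norm A) * int (\<sigma> m z)"
    unfolding coef_norm_def by (simp add: sum_distrib_right)
  finally show ?thesis .
qed

end

section \<open>Consequences of sparseness\<close>

locale sparse_pred = infinite_pred +
  assumes sparse_R: "sparse R"
begin

lemma opZero_or_opPos_or_opNeg: "opZero R A \<or> opPos R A \<or> opNeg R A"
  using sparse_R unfolding sparse_def by blast

lemma opPos_exceeds: "opPos R A \<Longrightarrow> \<exists>E. \<forall>z\<in>R. opApp R A (\<sigma> E z) > int z"
  using sparse_R unfolding sparse_def by blast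

lemma opPos_abs_op: "\<not> opZero R A \<Longrightarrow> opPos R (abs_op R A)"
  unfolding abs_op_def using opZero_or_opPos_or_opNeg[of A] by (auto simp: opPos_uminus_iff)

text \<open>If the increments of B were eventually non-positive, B would stay bounded along
  an orbit of the successor, contradicting (S2).\<close>
lemma opPos_difference:
  assumes B: "opPos R B" and L: "\<forall>z. opApp R L z = opApp R B (succR R z) - opApp R B z"
  shows "opPos R L"
proof (rule ccontr)
  assume "\<not> opPos R L"
  then have "opZero R L \<or> opNeg R L" using opZero_or_opPos_or_opNeg by blast
  then obtain T where T: "\<forall>z\<in>R. T \<le> z \<longrightarrow> opApp R L z \<le> 0"
    unfolding opZero_def by (metis less_imp_le opNeg_eventually order.refl)
  obtain z0 where z0: "z0 \<in> R" "T \<le> z0"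
    using infinite_R unfolding infinite_nat_iff_unbounded_le by blast
  have bounded: "opApp R B (\<sigma> k z0) \<le> opApp R B z0" for k
  proof (induct k)
    case (Suc k)
    have "T \<le> \<sigma> k z0" using sigma_ge_add[of z0 k] z0(2) by simp
    then have "opApp R L (\<sigma> k z0) \<le> 0" using T sigma_mem[OF z0(1)] by blast
    then show ?case using Suc L by simp
  qed simp
  obtain E where E: "\<forall>z\<in>R. opApp R B (\<sigma> E z) > int z" using opPos_exceeds[OF B] by blast
  define k where "k = nat (opApp R B z0) + 1"
  have "opApp R B z0 < int k" unfolding k_def by simp
  also have "\<dots> \<le> int (\<sigma> k z0)" using sigma_ge_add[of z0 k] by simp
  also have "\<dots> < opApp R B (\<sigma> E (\<sigma> k z0))" using E sigma_mem[OF z0(1)] by blast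
  also have "\<dots> = opApp R B (\<sigma> (E + k) z0)" by (simp add: funpow_add)
  finally show False using bounded[of "E + k"] by simp
qed

lemma opPos_eventually_strict_mono:
  assumes "opPos R B"
  shows "\<exists>T. \<forall>x\<in>R. \<forall>y\<in>R. T \<le> x \<longrightarrow> x < y \<longrightarrow> opApp R B x < opApp R B y"
proof -
  obtain L where L: "\<forall>z. opApp R L z = opApp R B (succR R z) - opApp R B z"
    using ex_difference_op by blast
  obtain T where T: "\<forall>z\<in>R. T \<le> z \<longrightarrow> opApp R L z > 0"
    using opPos_eventually opPos_difference[OF assms L] by blast
  have step: "opApp R B x < opApp R B (\<sigma> (Suc k) x)" if "x \<in> R" "T \<le> x" for x k
  proof (induct k)
    case (Suc k)
    have "T \<le> \<sigma> (Suc k) x" using sigma_ge_add[of x "Suc k"] that(2) by linarith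
    then have "opApp R L (\<sigma> (Suc k) x) > 0" using T sigma_mem[OF that(1)] by blast
    then show ?case using Suc L by simp
  qed (use T L that in auto)
  show ?thesis
  proof (intro exI ballI impI)
    fix x y assume xy: "x \<in> R" "y \<in> R" "T \<le> x" "x < y"
    then obtain k where "y = \<sigma> k x" using sigma_reaches by force
    moreover from this xy(4) obtain k' where "k = Suc k'" by (cases k) auto
    ultimately show "opApp R B x < opApp R B y" using step[OF xy(1,3)] by simp
  qed
qed

lemma opPos_eventually_mono:
  assumes "\<forall>x\<in>R. \<forall>y\<in>R. T \<le> x \<longrightarrow> x < y \<longrightarrow> opApp R B x < opApp R B y"
    and "x \<in> R" "y \<in> R" "T \<le> x" "x \<le> y"
  shows "opApp R B x \<le> opApp R B y"
  using assms by (cases "x = y") (auto intro: less_imp_le)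

lemma sigma_doubling: "\<exists>P. \<forall>z\<in>R. 2 * z \<le> \<sigma> P z"
proof -
  have gap: "opApp R [-1, 1] z = int (succR R z) - int z" for z
    unfolding opApp_def by (simp add: numeral_2_eq_2)
  then have "opPos R [-1, 1]" unfolding opPos_def using succR_mem_gt by simp
  then obtain E where E: "\<forall>z\<in>R. opApp R [-1, 1] (\<sigma> E z) > int z"
    using opPos_exceeds by blast
  have "2 * z \<le> \<sigma> (Suc E) z" if "z \<in> R" for z
  proof -
    have "int z < int (succR R (\<sigma> E z)) - int (\<sigma> E z)" using E that gap by metis
    then show ?thesis using sigma_ge_add[of z E] by simp
  qed
  then show ?thesis by blast
qed

lemma sigma_pow2_le:
  assumes P: "\<forall>z\<in>R. 2 * z \<le> \<sigma> P z" and z: "z \<in> R"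
  shows "2 ^ k * z \<le> \<sigma> (k * P) z"
proof (induct k)
  case (Suc k)
  have "\<sigma> (Suc k * P) z = \<sigma> P (\<sigma> (k * P) z)" by (simp add: funpow_add)
  moreover have "2 * \<sigma> (k * P) z \<le> \<sigma> P (\<sigma> (k * P) z)" using P sigma_mem[OF z] by blast
  ultimately show ?case using Suc by simp
qed simp

text \<open>The bound holds for arbitrary v, not only v in R, because a single successor step
  enters R; doubling handles the constant factor C.\<close>
lemma opPos_dominates:
  assumes B: "opPos R B"
  shows "\<exists>E. \<forall>E'\<ge>E. \<forall>v. opApp R B (\<sigma> E' v) > int C * int (\<sigma> m v)"
proof -
  obtain EB where EB: "\<forall>z\<in>R. opApp R B (\<sigma> EB z) > int z" using opPos_exceeds[OF B] by blast
  obtain P where P: "\<forall>z\<in>R. 2 * z \<le> \<sigma> P z" using sigma_doubling by blast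
  define E where "E = EB + (C * P + m)"
  have main: "opApp R B (\<sigma> E v) > int C * int (\<sigma> m v)" if v: "v \<in> R" for v
  proof -
    have "C * \<sigma> m v \<le> 2 ^ C * \<sigma> m v" by simp
    also have "\<dots> \<le> \<sigma> (C * P) (\<sigma> m v)" using sigma_pow2_le[OF P sigma_mem[OF v]] .
    also have "\<dots> = \<sigma> (C * P + m) v" by (simp add: funpow_add)
    finally have "int C * int (\<sigma> m v) \<le> int (\<sigma> (C * P + m) v)" by (metis of_nat_le_iff of_nat_mult)
    also have "\<dots> < opApp R B (\<sigma> EB (\<sigma> (C * P + m) v))" using EB sigma_mem[OF v] by blast
    also have "\<sigma> EB (\<sigma> (C * P + m) v) = \<sigma> E v" by (simp add: E_def funpow_add)
    finally show ?thesis .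
  qed
  show ?thesis
  proof (intro exI allI impI)
    fix E' v assume "Suc E \<le> E'"
    then obtain e where "E' = Suc E + e" using le_Suc_ex by blast
    then have e: "E' = E + Suc e" by simp
    have "\<sigma> m v \<le> \<sigma> m (\<sigma> (Suc e) v)" by (rule sigma_mono) (use sigma_ge_add[of v "Suc e"] in linarith)
    then have "int C * int (\<sigma> m v) \<le> int C * int (\<sigma> m (\<sigma> (Suc e) v))" by (simp add: mult_left_mono)
    also have "\<dots> < opApp R B (\<sigma> E (\<sigma> (Suc e) v))" using main[OF sigma_pos_mem[OF zero_less_Suc]] .
    finally show "opApp R B (\<sigma> E' v) > int C * int (\<sigma> m v)" by (simp only: e funpow_add o_apply)
  qed
qed

lemma opPos_difference_dominates:
  assumes B: "opPos R B" and L: "\<forall>z. opApp R L z = opApp R B (succR R z) - opApp R B z"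
  shows "\<exists>E. \<forall>D\<ge>E. \<forall>u\<in>R. \<forall>v. \<sigma> D v \<le> u \<longrightarrow> opApp R L u > int C * int (\<sigma> m v)"
proof -
  have L_pos: "opPos R L" using opPos_difference[OF B L] .
  obtain TL where TL: "\<forall>x\<in>R. \<forall>y\<in>R. TL \<le> x \<longrightarrow> x < y \<longrightarrow> opApp R L x < opApp R L y"
    using opPos_eventually_strict_mono[OF L_pos] by blast
  obtain EL where EL: "\<forall>E'\<ge>EL. \<forall>v. opApp R L (\<sigma> E' v) > int C * int (\<sigma> m v)"
    using opPos_dominates[OF L_pos] by blast
  define E where "E = Suc (max EL TL)"
  have "opApp R L u > int C * int (\<sigma> m v)" if "E \<le> D" "u \<in> R" "\<sigma> D v \<le> u" for D u v
  proof -
    have "0 < E" unfolding E_def by simp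
    then have mem: "\<sigma> E v \<in> R" using sigma_pos_mem by blast
    have "TL \<le> \<sigma> E v" using sigma_ge_add[of v E] E_def by simp
    moreover have "\<sigma> E v \<le> u" using sigma_mono_iter[OF that(1)] that(3) by (meson le_trans)
    ultimately have "opApp R L (\<sigma> E v) \<le> opApp R L u"
      using opPos_eventually_mono[OF TL mem that(2)] by blast
    moreover have "int C * int (\<sigma> m v) < opApp R L (\<sigma> E v)"
      using EL unfolding E_def by (meson le_SucI max.cobounded1)
    ultimately show ?thesis by linarith
  qed
  then show ?thesis by blast
qed

text \<open>Write w as the successor of some u above z: the increment B w - B z is at least
  the difference operator at u, and u lies D - 1 steps above v.\<close>
lemma opPos_increments_dominate:
  assumes B: "opPos R B"
  shows "\<forall>\<^sub>F D in sequentially. \<forall>z\<in>R. \<forall>w\<in>R. \<forall>v. D \<le> z \<longrightarrow> z < w \<longrightarrow> \<sigma> D v \<le> w \<longrightarrow>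
           opApp R B w - opApp R B z > int C * int (\<sigma> m v)"
proof -
  obtain T where T: "\<forall>x\<in>R. \<forall>y\<in>R. T \<le> x \<longrightarrow> x < y \<longrightarrow> opApp R B x < opApp R B y"
    using opPos_eventually_strict_mono[OF B] by blast
  obtain L where L: "\<forall>z. opApp R L z = opApp R B (succR R z) - opApp R B z"
    using ex_difference_op by blast
  obtain E where E: "\<forall>D\<ge>E. \<forall>u\<in>R. \<forall>v. \<sigma> D v \<le> u \<longrightarrow> opApp R L u > int C * int (\<sigma> m v)"
    using opPos_difference_dominates[OF B L] by blast
  show ?thesis
    unfolding eventually_sequentially
  proof (intro exI[of _ "max T (Suc (Suc E))"] allI impI ballI)
    fix D z w v
    assume D: "max T (Suc (Suc E)) \<le> D" and z: "z \<in> R" and w: "w \<in> R" and "D \<le> z"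
      and zw: "z < w" and vw: "\<sigma> D v \<le> w"
    obtain k where "w = \<sigma> k z" using sigma_reaches z w zw by force
    moreover from this zw obtain k' where "k = Suc k'" by (cases k) auto
    ultimately obtain u where u: "u \<in> R" "z \<le> u" "w = succR R u"
      using sigma_mem[OF z, of k'] sigma_ge_add[of z k'] by auto
    obtain D' where D': "D = Suc D'" "Suc E \<le> D'" using D by (cases D) auto
    have "succR R (\<sigma> D' v) \<le> succR R u" using vw u(3) D'(1) by simp
    moreover have "\<sigma> D' v \<in> R" using sigma_pos_mem D'(2) by simp
    ultimately have "\<sigma> D' v \<le> u" using succR_le_cancel by blast
    moreover have "E \<le> D'" using D'(2) by simp
    ultimately have "int C * int (\<sigma> m v) < opApp R L u" using E u(1) by blast
    also have "\<dots> = opApp R B w - opApp R B u" using L u(3) by simp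
    also have "\<dots> \<le> opApp R B w - opApp R B z"
      using opPos_eventually_mono[OF T z u(1)] \<open>D \<le> z\<close> D u(2) by simp
    finally show "opApp R B w - opApp R B z > int C * int (\<sigma> m v)" .
  qed
qed

end

section \<open>Tuples and the lexicographic structure of their values\<close>

text \<open>The z_{i+1} of the paper, with z_{n+1} = Min Rt. Since Rt is infinite, Min Rt is an
  unspecified number; the arguments below never need it to lie in R.\<close>
definition next_coord :: "nat set \<Rightarrow> nat list \<Rightarrow> nat \<Rightarrow> nat" where
  "next_coord Rt z i = (if Suc i < length z then z ! Suc i else Min Rt)"

lemma tupSet_iff:
  "z \<in> tupSet R Rt n D \<longleftrightarrow>
     length z = n \<and> (\<forall>i<n. z ! i \<in> Rt \<and> (succR R ^^ D) (next_coord Rt z i) \<le> z ! i)"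
  unfolding tupSet_def next_coord_def by auto

lemma tupSet_update_head:
  assumes z: "z \<in> tupSet R Rt n D" and r: "r \<in> Rt" "z ! 0 \<le> r"
  shows "z[0 := r] \<in> tupSet R Rt n D"
proof -
  have len: "length z = n"
    and st: "\<forall>i<n. z ! i \<in> Rt \<and> (succR R ^^ D) (next_coord Rt z i) \<le> z ! i"
    using z unfolding tupSet_iff by auto
  show ?thesis
    unfolding tupSet_iff
  proof (intro conjI allI impI)
    fix i assume i: "i < n"
    show "z[0 := r] ! i \<in> Rt" using st i r(1) len by (cases i) auto
    have "next_coord Rt (z[0 := r]) i = next_coord Rt z i" unfolding next_coord_def by simp
    then show "(succR R ^^ D) (next_coord Rt (z[0 := r]) i) \<le> z[0 := r] ! i"
      using st i r(2) len by (cases i) force+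
  qed (use len in simp)
qed

definition dotA_tail :: "nat set \<Rightarrow> int list list \<Rightarrow> nat list \<Rightarrow> nat \<Rightarrow> int" where
  "dotA_tail R As z i = (\<Sum>k\<in>{Suc i..<length As}. opApp R (As ! k) (z ! k))"

definition total_coef_norm :: "int list list \<Rightarrow> nat" where
  "total_coef_norm As = (\<Sum>k<length As. coef_norm (As ! k))"

definition total_length :: "int list list \<Rightarrow> nat" where
  "total_length As = (\<Sum>k<length As. length (As ! k))"

lemma dotA_split:
  assumes "i < length As"
  shows "dotA R As z = (\<Sum>k<i. opApp R (As ! k) (z ! k)) + opApp R (As ! i) (z ! i) + dotA_tail R As z i"
proof -
  have "{..<length As} = {..<Suc i} \<union> {Suc i..<length As}" using assms by auto
  then show ?thesis
    unfolding dotA_def dotA_tail_def by (simp add: sum.union_disjoint ivl_disj_int_one(2))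
qed

lemma dotA_diff_split:
  assumes "i < length As" "\<forall>k<i. z ! k = w ! k"
  shows "dotA R As w - dotA R As z =
    opApp R (As ! i) (w ! i) - opApp R (As ! i) (z ! i) + (dotA_tail R As w i - dotA_tail R As z i)"
  using dotA_split[OF assms(1), of R w] dotA_split[OF assms(1), of R z] assms(2) by simp

context infinite_pred
begin

lemma tupSet_next_coord_le:
  assumes "z \<in> tupSet R Rt n D" "i < n"
  shows "D \<le> z ! i" "next_coord Rt z i \<le> z ! i"
proof -
  have "\<sigma> D (next_coord Rt z i) \<le> z ! i" using assms unfolding tupSet_iff by blast
  then show "D \<le> z ! i" "next_coord Rt z i \<le> z ! i"
    using sigma_ge_add[of "next_coord Rt z i" D] by linarith+
qed

lemma tupSet_nth_le_next_coord:
  assumes z: "z \<in> tupSet R Rt n D" and k: "i < k" "k < n"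
  shows "z ! k \<le> next_coord Rt z i"
  using k
proof (induct k)
  case (Suc k)
  have len: "length z = n" using z unfolding tupSet_iff by blast
  show ?case
  proof (cases "i = k")
    case False
    then have "z ! k \<le> next_coord Rt z i" using Suc by simp
    moreover have "next_coord Rt z k = z ! Suc k" using Suc.prems len unfolding next_coord_def by simp
    ultimately show ?thesis using tupSet_next_coord_le(2)[OF z, of k] Suc.prems by simp
  qed (use Suc.prems len in \<open>simp add: next_coord_def\<close>)
qed simp

lemma sub_d_subset: "sub_d Rt d R \<Longrightarrow> Rt \<subseteq> R"
  unfolding sub_d_def using enumerate_in_set infinite_R by blast

lemma sub_d_sigma_mem:
  assumes "sub_d Rt d R" "r \<in> Rt" "d dvd k"
  shows "\<sigma> k r \<in> Rt"
proof -
  obtain N where N: "Rt = {enumerate R (N + d * t) | t. True}" using assms(1) unfolding sub_d_def by blast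
  obtain t where "r = enumerate R (N + d * t)" using assms(2) N by blast
  moreover obtain c where "k = d * c" using assms(3) by blast
  ultimately have "\<sigma> k r = enumerate R (N + d * (t + c))" by (simp add: sigma_enumerate algebra_simps)
  then show ?thesis using N by blast
qed

lemma sub_d_unbounded:
  assumes "sub_d Rt d R" "d \<ge> 1"
  shows "\<exists>r\<in>Rt. X \<le> r"
proof -
  obtain N where N: "Rt = {enumerate R (N + d * t) | t. True}" using assms(1) unfolding sub_d_def by blast
  have "X \<le> N + d * X" using assms(2) by (simp add: trans_le_add2)
  also have "\<dots> \<le> enumerate R (N + d * X)" using le_enumerate[OF infinite_R] .
  finally show ?thesis using N by blast
qed

text \<open>A point of tupSet: coordinates spaced exactly D steps apart above a large element of Rt.\<close>
lemma tupSet_nonempty: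
  assumes sub: "sub_d Rt d R" and d: "d \<ge> 1" and dD: "d dvd D"
  shows "tupSet R Rt n D \<noteq> {}"
proof -
  obtain b where b: "b \<in> Rt" "\<sigma> D (Min Rt) \<le> b" using sub_d_unbounded[OF sub d] by blast
  define z where "z = map (\<lambda>i. \<sigma> (D * (n - 1 - i)) b) [0..<n]"
  have "z \<in> tupSet R Rt n D"
    unfolding tupSet_iff
  proof (intro conjI allI impI)
    fix i assume i: "i < n"
    show "z ! i \<in> Rt" using i sub_d_sigma_mem[OF sub b(1)] dD unfolding z_def by simp
    show "\<sigma> D (next_coord Rt z i) \<le> z ! i"
    proof (cases "Suc i < n")
      case True
      then have "D + D * (n - 1 - Suc i) = D * (n - 1 - i)"
        by (metis Suc_diff_Suc diff_Suc_eq_diff_pred mult_Suc_right)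
      moreover have "\<sigma> D (z ! Suc i) = \<sigma> (D + D * (n - 1 - Suc i)) b"
        using True by (simp add: z_def funpow_add)
      ultimately show ?thesis using True unfolding next_coord_def by (simp add: z_def)
    qed (use i b(2) in \<open>simp add: z_def next_coord_def\<close>)
  qed (simp add: z_def)
  then show ?thesis by blast
qed

lemma abs_dotA_tail_le:
  assumes z: "z \<in> tupSet R Rt (length As) D" and i: "i < length As"
  shows "\<bar>dotA_tail R As z i\<bar> \<le> int (total_coef_norm As) * int (\<sigma> (total_length As) (next_coord Rt z i))"
proof -
  let ?m = "total_length As" and ?v = "next_coord Rt z i"
  have "\<bar>dotA_tail R As z i\<bar> \<le> (\<Sum>k\<in>{Suc i..<length As}. \<bar>opApp R (As ! k) (z ! k)\<bar>)"
    unfolding dotA_tail_def by (rule sum_abs)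
  also have "\<dots> \<le> (\<Sum>k\<in>{Suc i..<length As}. int (coef_norm (As ! k)) * int (\<sigma> ?m ?v))"
  proof (rule sum_mono)
    fix k assume k: "k \<in> {Suc i..<length As}"
    have "length (As ! k) \<le> ?m"
      unfolding total_length_def using k by (intro member_le_sum) auto
    then have "\<bar>opApp R (As ! k) (z ! k)\<bar> \<le> int (coef_norm (As ! k)) * int (\<sigma> ?m (z ! k))"
      by (rule opApp_abs_le)
    also have "\<dots> \<le> int (coef_norm (As ! k)) * int (\<sigma> ?m ?v)"
      using tupSet_nth_le_next_coord[OF z, of i k] k by (simp add: sigma_mono mult_left_mono)
    finally show "\<bar>opApp R (As ! k) (z ! k)\<bar> \<le> int (coef_norm (As ! k)) * int (\<sigma> ?m ?v)" .
  qed
  also have "\<dots> = int (\<Sum>k\<in>{Suc i..<length As}. coef_norm (As ! k)) * int (\<sigma> ?m ?v)"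
    by (simp add: sum_distrib_right)
  also have "\<dots> \<le> int (total_coef_norm As) * int (\<sigma> ?m ?v)"
    unfolding total_coef_norm_def by (intro mult_right_mono of_nat_mono sum_mono2) auto
  finally show ?thesis .
qed

text \<open>Both tails are bounded at v, the larger of the two next coordinates, and v lies
  D steps below w_i, so the increment at coordinate i outweighs them.\<close>
lemma dotA_lex_sign:
  assumes Rt: "Rt \<subseteq> R"
    and incr: "\<forall>i<length As. \<forall>x\<in>R. \<forall>y\<in>R. \<forall>v. D \<le> x \<longrightarrow> x < y \<longrightarrow> \<sigma> D v \<le> y \<longrightarrow>
      opApp R (abs_op R (As ! i)) y - opApp R (abs_op R (As ! i)) x
        > int (2 * total_coef_norm As) * int (\<sigma> (total_length As) v)"
    and z: "z \<in> tupSet R Rt (length As) D" and w: "w \<in> tupSet R Rt (length As) D"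
    and i: "i < length As" and prefix: "\<forall>k<i. z ! k = w ! k" and less: "z ! i < w ! i"
  shows "op_sign R (As ! i) * (dotA R As w - dotA R As z) > 0"
proof -
  let ?C = "int (total_coef_norm As)" and ?m = "total_length As"
  define v where "v = max (next_coord Rt z i) (next_coord Rt w i)"
  have mem: "z ! i \<in> R" "w ! i \<in> R" using z w i Rt unfolding tupSet_iff by auto
  have "\<sigma> D (next_coord Rt z i) \<le> z ! i" "\<sigma> D (next_coord Rt w i) \<le> w ! i"
    using z w i unfolding tupSet_iff by auto
  then have "\<sigma> D v \<le> w ! i" using less unfolding v_def by (simp add: max_def)
  then have "opApp R (abs_op R (As ! i)) (w ! i) - opApp R (abs_op R (As ! i)) (z ! i)
      > 2 * ?C * int (\<sigma> ?m v)"
    using incr i mem less tupSet_next_coord_le(1)[OF z i] by auto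
  then have head: "op_sign R (As ! i) * (opApp R (As ! i) (w ! i) - opApp R (As ! i) (z ! i))
      > 2 * ?C * int (\<sigma> ?m v)"
    by (simp add: opApp_abs_op right_diff_distrib)
  have "?C * int (\<sigma> ?m (next_coord Rt u i)) \<le> ?C * int (\<sigma> ?m v)" if "u = z \<or> u = w" for u
    using that sigma_mono[of "next_coord Rt u i" v ?m] by (auto simp: v_def mult_left_mono)
  then have "\<bar>dotA_tail R As z i\<bar> \<le> ?C * int (\<sigma> ?m v)" "\<bar>dotA_tail R As w i\<bar> \<le> ?C * int (\<sigma> ?m v)"
    using abs_dotA_tail_le[OF z i] abs_dotA_tail_le[OF w i] by fastforce+
  then have "\<bar>op_sign R (As ! i) * (dotA_tail R As w i - dotA_tail R As z i)\<bar> \<le> 2 * ?C * int (\<sigma> ?m v)"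
    unfolding op_sign_def using abs_triangle_ineq4[of "dotA_tail R As w i" "dotA_tail R As z i"] by auto
  then show ?thesis
    using head dotA_diff_split[OF i prefix, of R] unfolding abs_le_iff by (simp add: distrib_left)
qed

end

context sparse_pred
begin

lemma eventually_dotA_lex_sign:
  assumes Rt: "Rt \<subseteq> R" and nz: "\<forall>i<length As. \<not> opZero R (As ! i)"
  shows "\<forall>\<^sub>F D in sequentially. \<forall>z\<in>tupSet R Rt (length As) D. \<forall>w\<in>tupSet R Rt (length As) D.
    \<forall>i<length As. (\<forall>k<i. z ! k = w ! k) \<longrightarrow> z ! i < w ! i \<longrightarrow>
      op_sign R (As ! i) * (dotA R As w - dotA R As z) > 0"
proof -
  have "\<forall>\<^sub>F D in sequentially. \<forall>i\<in>{..<length As}. \<forall>x\<in>R. \<forall>y\<in>R. \<forall>v. D \<le> x \<longrightarrow> x < y \<longrightarrow> \<sigma> D v \<le> y \<longrightarrow>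
      opApp R (abs_op R (As ! i)) y - opApp R (abs_op R (As ! i)) x
        > int (2 * total_coef_norm As) * int (\<sigma> (total_length As) v)"
    using nz by (intro eventually_ball_finite ballI opPos_increments_dominate opPos_abs_op) auto
  then show ?thesis
    by eventually_elim (use dotA_lex_sign[OF Rt] in blast)
qed

text \<open>The head term dominates twice the tail.\<close>
lemma eventually_dotA_near_head:
  assumes Rt: "Rt \<subseteq> R" and ne: "As \<noteq> []" and nz: "\<not> opZero R (As ! 0)"
  shows "\<forall>\<^sub>F D in sequentially. \<forall>z\<in>tupSet R Rt (length As) D.
    opApp R (abs_op R (As ! 0)) (z ! 0) < 2 * (op_sign R (As ! 0) * dotA R As z) \<and>
    2 * (op_sign R (As ! 0) * dotA R As z) < 3 * opApp R (abs_op R (As ! 0)) (z ! 0)"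
proof -
  let ?B = "abs_op R (As ! 0)" and ?C = "total_coef_norm As" and ?m = "total_length As"
  have B: "opPos R ?B" using opPos_abs_op[OF nz] .
  obtain T where T: "\<forall>x\<in>R. \<forall>y\<in>R. T \<le> x \<longrightarrow> x < y \<longrightarrow> opApp R ?B x < opApp R ?B y"
    using opPos_eventually_strict_mono[OF B] by blast
  obtain E where E: "\<forall>E'\<ge>E. \<forall>v. opApp R ?B (\<sigma> E' v) > int (2 * ?C) * int (\<sigma> ?m v)"
    using opPos_dominates[OF B] by blast
  define E0 where "E0 = Suc (max E T)"
  show ?thesis
    unfolding eventually_sequentially
  proof (intro exI[of _ E0] allI impI ballI)
    fix D z assume D: "E0 \<le> D" and z: "z \<in> tupSet R Rt (length As) D"
    have i0: "0 < length As" using ne by simp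
    let ?v = "next_coord Rt z 0"
    have z0: "z ! 0 \<in> R" "\<sigma> D ?v \<le> z ! 0" using z i0 Rt unfolding tupSet_iff by auto
    have "0 < E0" unfolding E0_def by simp
    then have mem: "\<sigma> E0 ?v \<in> R" using sigma_pos_mem by blast
    have "T \<le> \<sigma> E0 ?v" using sigma_ge_add[of ?v E0] E0_def by simp
    moreover have "\<sigma> E0 ?v \<le> z ! 0" using sigma_mono_iter[OF D] z0(2) by (meson le_trans)
    ultimately have "opApp R ?B (\<sigma> E0 ?v) \<le> opApp R ?B (z ! 0)"
      using opPos_eventually_mono[OF T mem z0(1)] by blast
    moreover have "opApp R ?B (\<sigma> E0 ?v) > int (2 * ?C) * int (\<sigma> ?m ?v)"
      using E unfolding E0_def by (meson le_SucI max.cobounded1)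
    moreover have "\<bar>dotA_tail R As z 0\<bar> \<le> int ?C * int (\<sigma> ?m ?v)" using abs_dotA_tail_le[OF z i0] .
    moreover have "op_sign R (As ! 0) * dotA R As z
        = opApp R ?B (z ! 0) + op_sign R (As ! 0) * dotA_tail R As z 0"
      using dotA_split[OF i0, of R z] by (simp add: opApp_abs_op distrib_left)
    moreover have "\<bar>op_sign R (As ! 0) * dotA_tail R As z 0\<bar> = \<bar>dotA_tail R As z 0\<bar>"
      unfolding op_sign_def by simp
    ultimately show "opApp R ?B (z ! 0) < 2 * (op_sign R (As ! 0) * dotA R As z) \<and>
      2 * (op_sign R (As ! 0) * dotA R As z) < 3 * opApp R ?B (z ! 0)"
      unfolding abs_le_iff by linarith
  qed
qed

end

section \<open>Best approximations for a fixed large D\<close>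

lemma Pdelta_below:
  assumes inj: "inj_on (dotA R As) (tupSet R Rt (length As) D)"
    and ex: "\<exists>w\<in>tupSet R Rt (length As) D. dotA R As w < y"
  shows "Pdelta R Rt As D y \<in> tupSet R Rt (length As) D \<and> dotA R As (Pdelta R Rt As D y) < y \<and>
    (\<forall>w\<in>tupSet R Rt (length As) D. dotA R As w < y \<longrightarrow> dotA R As w \<le> dotA R As (Pdelta R Rt As D y))"
proof -
  let ?S = "tupSet R Rt (length As) D" and ?f = "dotA R As"
  let ?Q = "\<lambda>z. z \<in> ?S \<and> ?f z < y \<and> (\<forall>w\<in>?S. ?f w < y \<longrightarrow> ?f w \<le> ?f z)"
  obtain w0 where w0: "w0 \<in> ?S \<and> ?f w0 < y" using ex by blast
  obtain z where z: "z \<in> ?S \<and> ?f z < y"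
    and z_min: "\<forall>w. w \<in> ?S \<and> ?f w < y \<longrightarrow> nat (y - ?f z) \<le> nat (y - ?f w)"
    using ex_has_least_nat[of "\<lambda>w. w \<in> ?S \<and> ?f w < y" w0 "\<lambda>w. nat (y - ?f w)", OF w0] by blast
  have Qz: "?Q z" using z z_min by force
  have "z' = z" if "?Q z'" for z'
  proof -
    have "?f z' = ?f z" using that Qz by (meson order_antisym)
    then show ?thesis using inj that Qz by (blast dest: inj_onD)
  qed
  then have "(THE z. ?Q z) = z" using Qz by (rule the_equality[rotated])
  then show ?thesis using Qz ex unfolding Pdelta_def Let_def by simp
qed

lemma Pdelta_least:
  assumes inj: "inj_on (dotA R As) (tupSet R Rt (length As) D)"
    and nex: "\<not> (\<exists>w\<in>tupSet R Rt (length As) D. dotA R As w < y)"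
    and least: "\<exists>z\<in>tupSet R Rt (length As) D. \<forall>w\<in>tupSet R Rt (length As) D. dotA R As z \<le> dotA R As w"
  shows "Pdelta R Rt As D y \<in> tupSet R Rt (length As) D \<and>
    (\<forall>w\<in>tupSet R Rt (length As) D. dotA R As (Pdelta R Rt As D y) \<le> dotA R As w)"
proof -
  let ?S = "tupSet R Rt (length As) D" and ?f = "dotA R As"
  let ?Q = "\<lambda>z. z \<in> ?S \<and> (\<forall>w\<in>?S. ?f z \<le> ?f w)"
  obtain z where Qz: "?Q z" using least by blast
  have "z' = z" if "?Q z'" for z'
  proof -
    have "?f z' = ?f z" using that Qz by (meson order_antisym)
    then show ?thesis using inj that Qz by (blast dest: inj_onD)
  qed
  then have "(THE z. ?Q z) = z" using Qz by (rule the_equality[rotated])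
  then show ?thesis using Qz nex unfolding Pdelta_def Let_def by simp
qed

locale large_delta = sparse_pred R for R +
  fixes Rt :: "nat set" and d :: nat and As :: "int list list" and D :: nat
  assumes sub_d: "sub_d Rt d R" and d_pos: "1 \<le> d" and d_dvd_D: "d dvd D"
    and As_nonempty: "As \<noteq> []" and head_nonzero: "\<not> opZero R (As ! 0)"
    and lex_sign: "\<forall>z\<in>tupSet R Rt (length As) D. \<forall>w\<in>tupSet R Rt (length As) D.
      \<forall>i<length As. (\<forall>k<i. z ! k = w ! k) \<longrightarrow> z ! i < w ! i \<longrightarrow>
        op_sign R (As ! i) * (dotA R As w - dotA R As z) > 0"
    and near_head: "\<forall>z\<in>tupSet R Rt (length As) D.
      opApp R (abs_op R (As ! 0)) (z ! 0) < 2 * (op_sign R (As ! 0) * dotA R As z) \<and>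
      2 * (op_sign R (As ! 0) * dotA R As z) < 3 * opApp R (abs_op R (As ! 0)) (z ! 0)"
    and head_strict_mono: "\<forall>x\<in>R. \<forall>y\<in>R. D \<le> x \<longrightarrow> x < y \<longrightarrow>
      opApp R (abs_op R (As ! 0)) x < opApp R (abs_op R (As ! 0)) y"
begin

abbreviation tuples :: "nat list set" where
  "tuples \<equiv> tupSet R Rt (length As) D"

abbreviation F :: "nat list \<Rightarrow> int" where
  "F \<equiv> dotA R As"

abbreviation \<beta> :: "nat \<Rightarrow> int" where
  "\<beta> \<equiv> opApp R (abs_op R (As ! 0))"

abbreviation \<epsilon>\<^sub>1 :: int where
  "\<epsilon>\<^sub>1 \<equiv> op_sign R (As ! 0)"

abbreviation \<pi> :: "int \<Rightarrow> nat list" where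
  "\<pi> \<equiv> Pdelta R Rt As D"

abbreviation \<pi>\<^sub>1 :: "int \<Rightarrow> nat" where
  "\<pi>\<^sub>1 \<equiv> P1delta R Rt As D"

lemma head_mem:
  assumes "z \<in> tuples"
  shows "z ! 0 \<in> Rt" "z ! 0 \<in> R" "D \<le> z ! 0"
  using assms As_nonempty sub_d_subset[OF sub_d] tupSet_next_coord_le(1)[OF assms]
  unfolding tupSet_iff by auto

lemma \<beta>_mono: "x \<in> R \<Longrightarrow> y \<in> R \<Longrightarrow> D \<le> x \<Longrightarrow> x \<le> y \<Longrightarrow> \<beta> x \<le> \<beta> y"
  using opPos_eventually_mono[OF head_strict_mono] by blast

lemma tuples_nonempty: "tuples \<noteq> {}"
  using tupSet_nonempty[OF sub_d d_pos d_dvd_D] .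

lemma F_inj: "inj_on F tuples"
proof (rule inj_onI, rule ccontr)
  fix z w assume z: "z \<in> tuples" and w: "w \<in> tuples" and eq: "F z = F w" and "z \<noteq> w"
  then have "\<exists>i. i < length As \<and> z ! i \<noteq> w ! i"
    using nth_equalityI[of z w] unfolding tupSet_iff by auto
  then obtain i where i: "i < length As" "z ! i \<noteq> w ! i"
    and prefix: "\<forall>k<i. z ! k = w ! k"
    by (auto simp: exists_least_iff[of "\<lambda>i. i < length As \<and> z ! i \<noteq> w ! i"])
  then consider "z ! i < w ! i" | "w ! i < z ! i" by linarith
  then show False
    using lex_sign z w i(1) prefix eq by cases (metis less_irrefl mult_zero_right diff_self)+
qed

lemma F_head_strict_mono: "z \<in> tuples \<Longrightarrow> w \<in> tuples \<Longrightarrow> z ! 0 < w ! 0 \<Longrightarrow> \<epsilon>\<^sub>1 * F z < \<epsilon>\<^sub>1 * F w"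
  using lex_sign As_nonempty by (force simp: right_diff_distrib)

lemma update_head_mem:
  assumes "z \<in> tuples" "r \<in> Rt" "z ! 0 \<le> r"
  shows "z[0 := r] \<in> tuples" "z[0 := r] ! 0 = r"
  using tupSet_update_head[OF assms] assms(1) As_nonempty unfolding tupSet_iff by auto

lemma P1delta_eq_head: "\<pi> y \<in> tuples \<Longrightarrow> \<pi>\<^sub>1 y = \<pi> y ! 0"
  unfolding P1delta_def tupSet_iff using As_nonempty by (auto intro!: hd_conv_nth)

lemma tuples_infinite: "infinite tuples"
proof -
  obtain z0 where z0: "z0 \<in> tuples" using tuples_nonempty by blast
  let ?H = "{r \<in> Rt. z0 ! 0 \<le> r}"
  have "\<exists>r\<in>?H. m \<le> r" for m
    using sub_d_unbounded[OF sub_d d_pos, of "max m (z0 ! 0)"] by auto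
  then have "infinite ?H" unfolding infinite_nat_iff_unbounded_le by blast
  moreover have "inj_on (\<lambda>r. z0[0 := r]) ?H"
  proof (rule inj_onI)
    fix r r' assume "r \<in> ?H" "r' \<in> ?H" "z0[0 := r] = z0[0 := r']"
    then show "r = r'" using update_head_mem(2)[OF z0] by (metis mem_Collect_eq)
  qed
  moreover have "(\<lambda>r. z0[0 := r]) ` ?H \<subseteq> tuples" using update_head_mem(1)[OF z0] by blast
  ultimately show ?thesis by (meson finite_imageD infinite_super)
qed

context
  assumes pos: "opPos R (As ! 0)"
begin

lemma near_head_pos: "z \<in> tuples \<Longrightarrow> \<beta> (z ! 0) < 2 * F z \<and> 2 * F z < 3 * \<beta> (z ! 0)"
  using near_head pos by (simp add: op_sign_def)

lemma F_head_strict_mono_pos: "z \<in> tuples \<Longrightarrow> w \<in> tuples \<Longrightarrow> z ! 0 < w ! 0 \<Longrightarrow> F z < F w"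
  using F_head_strict_mono pos by (simp add: op_sign_def)

lemma F_pos: "z \<in> tuples \<Longrightarrow> 0 < F z"
  using near_head_pos by fastforce

lemma F_has_min: "\<exists>z\<in>tuples. \<forall>w\<in>tuples. F z \<le> F w"
proof -
  obtain z0 where "z0 \<in> tuples" using tuples_nonempty by blast
  then obtain z where "z \<in> tuples" "\<forall>w. w \<in> tuples \<longrightarrow> nat (F z) \<le> nat (F w)"
    using ex_has_least_nat[of "\<lambda>w. w \<in> tuples" z0 "\<lambda>w. nat (F w)"] by blast
  then show ?thesis using F_pos by (metis nat_le_eq_zle)
qed

lemma Pdelta_mem_pos: "\<pi> y \<in> tuples"
  using Pdelta_below[OF F_inj] Pdelta_least[OF F_inj _ F_has_min] by blast

lemma F_Pdelta_mono:
  assumes "y \<le> y'"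
  shows "F (\<pi> y) \<le> F (\<pi> y')"
proof (cases "\<exists>w\<in>tuples. F w < y")
  case True
  then have "F (\<pi> y) < y'" using Pdelta_below[OF F_inj] assms by fastforce
  then show ?thesis using Pdelta_below[OF F_inj] Pdelta_mem_pos by blast
next
  case False
  then show ?thesis using Pdelta_least[OF F_inj _ F_has_min] Pdelta_mem_pos by blast
qed

lemma P1delta_mono: "y \<le> y' \<Longrightarrow> \<pi>\<^sub>1 y \<le> \<pi>\<^sub>1 y'"
  using F_Pdelta_mono F_head_strict_mono_pos[OF Pdelta_mem_pos Pdelta_mem_pos]
  unfolding P1delta_eq_head[OF Pdelta_mem_pos] by (meson not_le)

text \<open>Raising the head of P y by d steps yields a tuple of value at least y, and the
  value of a tuple is governed by its head.\<close>
lemma P1delta_head_bound: "2 * y < 3 * \<beta> (\<sigma> d (\<pi>\<^sub>1 y))"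
proof -
  let ?r = "\<sigma> d (\<pi>\<^sub>1 y)"
  let ?w = "(\<pi> y)[0 := ?r]"
  have head: "\<pi>\<^sub>1 y = \<pi> y ! 0" using P1delta_eq_head[OF Pdelta_mem_pos] .
  have "?r \<in> Rt" using sub_d_sigma_mem[OF sub_d head_mem(1)[OF Pdelta_mem_pos]] head by simp
  moreover have "\<pi> y ! 0 < ?r" using sigma_strict_mono_iter[of 0 d] d_pos head by simp
  ultimately have w: "?w \<in> tuples" "?w ! 0 = ?r"
    using update_head_mem[OF Pdelta_mem_pos] by auto
  then have "F (\<pi> y) < F ?w" using F_head_strict_mono_pos[OF Pdelta_mem_pos] head \<open>\<pi> y ! 0 < ?r\<close> by simp
  then have "y \<le> F ?w"
    using Pdelta_below[OF F_inj] w(1) by (meson linorder_not_less order.trans)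
  then show ?thesis using near_head_pos[OF w(1)] unfolding w(2) by linarith
qed

lemma P1delta_mem_pos: "\<pi>\<^sub>1 y \<in> R" "D \<le> \<pi>\<^sub>1 y"
  using head_mem[OF Pdelta_mem_pos] P1delta_eq_head[OF Pdelta_mem_pos] by auto

lemma ex_F_less_pos:
  assumes "Inf (F ` tuples) < a"
  shows "\<exists>w\<in>tuples. F w < a" "0 < a"
proof -
  have "bdd_below (F ` tuples)" using F_pos by (meson bdd_belowI2 less_imp_le)
  then show "\<exists>w\<in>tuples. F w < a"
    using assms tuples_nonempty cInf_less_iff[of "F ` tuples" a] by auto
  then show "0 < a" using F_pos by force
qed

lemma P1delta_add_head_bound:
  assumes a: "Inf (F ` tuples) < a" and b: "0 \<le> b"
  shows "\<beta> (\<pi>\<^sub>1 (a + b)) < 6 * \<beta> (\<sigma> d (max (\<pi>\<^sub>1 a) (\<pi>\<^sub>1 b)))"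
proof -
  define M where "M = max (\<pi>\<^sub>1 a) (\<pi>\<^sub>1 b)"
  have "\<beta> (\<sigma> d (\<pi>\<^sub>1 y)) \<le> \<beta> (\<sigma> d M)" if "y = a \<or> y = b" for y
    using that sigma_pos_mem d_pos P1delta_mem_pos(2)[of y] sigma_ge_add[of "\<pi>\<^sub>1 y" d]
    by (intro \<beta>_mono sigma_mono) (auto simp: M_def)
  then have "\<beta> (\<sigma> d (\<pi>\<^sub>1 a)) \<le> \<beta> (\<sigma> d M)" "\<beta> (\<sigma> d (\<pi>\<^sub>1 b)) \<le> \<beta> (\<sigma> d M)"
    by blast+
  then have sum_bound: "2 * (a + b) < 6 * \<beta> (\<sigma> d M)"
    using P1delta_head_bound[of a] P1delta_head_bound[of b] by (smt (verit))
  have "\<exists>w\<in>tuples. F w < a + b" using ex_F_less_pos(1)[OF a] b by force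
  then have F_less: "F (\<pi> (a + b)) < a + b" using Pdelta_below[OF F_inj] by blast
  have "\<beta> (\<pi>\<^sub>1 (a + b)) < 2 * F (\<pi> (a + b))"
    using near_head_pos[OF Pdelta_mem_pos] unfolding P1delta_eq_head[OF Pdelta_mem_pos] by blast
  also have "\<dots> < 2 * (a + b)" using F_less by simp
  also have "\<dots> < 6 * \<beta> (\<sigma> d M)" by (rule sum_bound)
  finally show ?thesis unfolding M_def .
qed

text \<open>The head of P(a + b) is governed by a + b, and \<beta> outgrows six times itself within
  a bounded number E of steps.\<close>
lemma P1delta_add_pos:
  "\<exists>\<Lambda>. \<forall>a b. Inf (F ` tuples) < a \<longrightarrow> 0 \<le> b \<longrightarrow>
     (\<exists>k\<le>\<Lambda>. \<pi>\<^sub>1 (a + b) = \<sigma> k (max (\<pi>\<^sub>1 a) (\<pi>\<^sub>1 b)))"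
proof -
  let ?K = "coef_norm (abs_op R (As ! 0))" and ?m = "length (abs_op R (As ! 0))"
  obtain E where E: "\<forall>E'\<ge>E. \<forall>v. \<beta> (\<sigma> E' v) > int (6 * ?K) * int (\<sigma> ?m v)"
    using opPos_dominates[OF opPos_abs_op[OF head_nonzero]] by blast
  have "\<exists>k\<le>E + d. \<pi>\<^sub>1 (a + b) = \<sigma> k (max (\<pi>\<^sub>1 a) (\<pi>\<^sub>1 b))"
    if a: "Inf (F ` tuples) < a" and b: "0 \<le> b" for a b
  proof -
    define M where "M = max (\<pi>\<^sub>1 a) (\<pi>\<^sub>1 b)"
    define r where "r = \<pi>\<^sub>1 (a + b)"
    have Mr: "M \<le> r" unfolding M_def r_def using P1delta_mono ex_F_less_pos(2)[OF a] b by simp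
    have dM: "\<sigma> d M \<in> R" "D \<le> \<sigma> d M"
      using sigma_pos_mem d_pos P1delta_mem_pos(2)[of a] sigma_ge_add[of M d] unfolding M_def by auto
    have "r < \<sigma> (E + d) M"
    proof (rule ccontr)
      assume "\<not> r < \<sigma> (E + d) M"
      then have "\<beta> (\<sigma> E (\<sigma> d M)) \<le> \<beta> r"
        using \<beta>_mono[of "\<sigma> E (\<sigma> d M)" r] sigma_mem[OF dM(1)] sigma_ge_add[of "\<sigma> d M" E] dM(2)
          P1delta_mem_pos unfolding r_def by (simp add: funpow_add)
      moreover have "\<beta> (\<sigma> d M) \<le> int ?K * int (\<sigma> ?m (\<sigma> d M))"
        using opApp_abs_le[of "abs_op R (As ! 0)" ?m] by (meson abs_le_D1 order_refl)
      moreover have "int (6 * ?K) * int (\<sigma> ?m (\<sigma> d M)) < \<beta> (\<sigma> E (\<sigma> d M))" using E by blast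
      ultimately show False using P1delta_add_head_bound[OF a b] unfolding M_def r_def by simp
    qed
    then show ?thesis
      using sigma_reaches_within[of M r "E + d"] Mr P1delta_mem_pos unfolding M_def r_def
      by (metis less_imp_le max_def)
  qed
  then show ?thesis by blast
qed

end

context
  assumes neg: "\<not> opPos R (As ! 0)"
begin

lemma near_head_neg: "z \<in> tuples \<Longrightarrow> \<beta> (z ! 0) < - 2 * F z \<and> - 2 * F z < 3 * \<beta> (z ! 0)"
  using near_head neg by (simp add: op_sign_def)

lemma F_head_strict_antimono: "z \<in> tuples \<Longrightarrow> w \<in> tuples \<Longrightarrow> z ! 0 < w ! 0 \<Longrightarrow> F w < F z"
  using F_head_strict_mono neg by (simp add: op_sign_def)

lemma F_neg: "z \<in> tuples \<Longrightarrow> F z < 0"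
  using near_head_neg by fastforce

text \<open>An injective map from an infinite set into the negative integers is unbounded below.\<close>
lemma F_unbounded_below: "\<exists>w\<in>tuples. F w < y"
proof (rule ccontr)
  assume "\<not> (\<exists>w\<in>tuples. F w < y)"
  then have "F ` tuples \<subseteq> {y..0}" using F_neg by (force simp: not_less)
  then have "finite tuples" using F_inj by (meson finite_atLeastAtMost_int finite_imageD finite_subset)
  then show False using tuples_infinite by blast
qed

lemma Pdelta_neg: "\<pi> y \<in> tuples \<and> F (\<pi> y) < y \<and> (\<forall>w\<in>tuples. F w < y \<longrightarrow> F w \<le> F (\<pi> y))"
  using Pdelta_below[OF F_inj F_unbounded_below] .

lemma P1delta_antimono:
  assumes "y \<le> y'"
  shows "\<pi>\<^sub>1 y' \<le> \<pi>\<^sub>1 y"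
proof (rule ccontr)
  assume "\<not> \<pi>\<^sub>1 y' \<le> \<pi>\<^sub>1 y"
  then have "\<pi> y ! 0 < \<pi> y' ! 0" using P1delta_eq_head Pdelta_neg by simp
  then have "F (\<pi> y') < F (\<pi> y)" using F_head_strict_antimono Pdelta_neg by blast
  moreover have "F (\<pi> y) < y'" using Pdelta_neg[of y] assms by linarith
  ultimately show False using Pdelta_neg[of y'] Pdelta_neg[of y] by force
qed

lemma P1delta_mem_neg: "\<pi>\<^sub>1 y \<in> Rt" "\<pi>\<^sub>1 y \<in> R" "D \<le> \<pi>\<^sub>1 y" "\<pi>\<^sub>1 y = \<pi> y ! 0"
  using head_mem[OF conjunct1[OF Pdelta_neg]] P1delta_eq_head[OF conjunct1[OF Pdelta_neg]] by simp_all

lemma P1delta_add_sum_bound_neg: "- 2 * (a + b) < 6 * \<beta> (max (\<pi>\<^sub>1 a) (\<pi>\<^sub>1 b))"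
proof -
  define M where "M = max (\<pi>\<^sub>1 a) (\<pi>\<^sub>1 b)"
  have "- 2 * y < 3 * \<beta> M" if "y = a \<or> y = b" for y
  proof -
    have "M \<in> R" using P1delta_mem_neg(2) unfolding M_def by (simp add: max_def)
    then have "\<beta> (\<pi>\<^sub>1 y) \<le> \<beta> M"
      using that by (intro \<beta>_mono[OF P1delta_mem_neg(2) _ P1delta_mem_neg(3)]) (auto simp: M_def)
    then show ?thesis using near_head_neg[of "\<pi> y"] Pdelta_neg[of y] P1delta_mem_neg(4)[of y] by auto
  qed
  from this[of a] this[of b] show ?thesis unfolding M_def by simp
qed

text \<open>Otherwise raising the head of P a to the given point would produce a tuple of value
  below a + b with a larger head than P (a + b).\<close>
lemma P1delta_add_le_neg:
  assumes "- 2 * (a + b) < \<beta> (\<sigma> j (max (\<pi>\<^sub>1 a) (\<pi>\<^sub>1 b)))" and "d dvd j"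
  shows "\<pi>\<^sub>1 (a + b) \<le> \<sigma> j (max (\<pi>\<^sub>1 a) (\<pi>\<^sub>1 b))"
proof (rule ccontr)
  define M where "M = max (\<pi>\<^sub>1 a) (\<pi>\<^sub>1 b)"
  assume "\<not> \<pi>\<^sub>1 (a + b) \<le> \<sigma> j (max (\<pi>\<^sub>1 a) (\<pi>\<^sub>1 b))"
  then have less: "\<sigma> j M < \<pi> (a + b) ! 0" using P1delta_mem_neg(4) unfolding M_def by simp
  let ?w = "(\<pi> a)[0 := \<sigma> j M]"
  have "M \<in> Rt" using P1delta_mem_neg(1) unfolding M_def by (simp add: max_def)
  moreover have "\<pi> a ! 0 \<le> \<sigma> j M"
    using P1delta_mem_neg(4)[of a] sigma_ge_add[of M j] unfolding M_def by simp
  ultimately have w: "?w \<in> tuples" "?w ! 0 = \<sigma> j M"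
    using update_head_mem[OF conjunct1[OF Pdelta_neg] sub_d_sigma_mem[OF sub_d _ assms(2)]] by auto
  then have "F ?w < a + b" using near_head_neg[OF w(1)] assms(1) unfolding M_def by simp
  then have "F ?w \<le> F (\<pi> (a + b))" using Pdelta_neg w(1) by blast
  moreover have "F (\<pi> (a + b)) < F ?w"
    using F_head_strict_antimono[OF w(1) conjunct1[OF Pdelta_neg]] w(2) less by simp
  ultimately show False by simp
qed

lemma P1delta_add_neg:
  "\<exists>\<Lambda>. \<forall>a b. a < Sup (F ` tuples) \<longrightarrow> b \<le> 0 \<longrightarrow>
     (\<exists>k\<le>\<Lambda>. \<pi>\<^sub>1 (a + b) = \<sigma> k (max (\<pi>\<^sub>1 a) (\<pi>\<^sub>1 b)))"
proof -
  let ?K = "coef_norm (abs_op R (As ! 0))" and ?m = "length (abs_op R (As ! 0))"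
  obtain E where E: "\<forall>E'\<ge>E. \<forall>v. \<beta> (\<sigma> E' v) > int (6 * ?K) * int (\<sigma> ?m v)"
    using opPos_dominates[OF opPos_abs_op[OF head_nonzero]] by blast
  have "\<exists>k\<le>d * E. \<pi>\<^sub>1 (a + b) = \<sigma> k (max (\<pi>\<^sub>1 a) (\<pi>\<^sub>1 b))"
    if a: "a < Sup (F ` tuples)" and b: "b \<le> 0" for a b
  proof -
    define M where "M = max (\<pi>\<^sub>1 a) (\<pi>\<^sub>1 b)"
    have "Sup (F ` tuples) \<le> 0"
      using F_neg tuples_nonempty by (intro cSup_least) (auto intro: less_imp_le)
    then have "M \<le> \<pi>\<^sub>1 (a + b)" unfolding M_def using P1delta_antimono a b by simp
    have "\<beta> M \<le> int ?K * int (\<sigma> ?m M)"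
      using opApp_abs_le[of "abs_op R (As ! 0)" ?m] by (meson abs_le_D1 order_refl)
    moreover have "int (6 * ?K) * int (\<sigma> ?m M) < \<beta> (\<sigma> (d * E) M)" using E d_pos by simp
    ultimately have "- 2 * (a + b) < \<beta> (\<sigma> (d * E) M)"
      using P1delta_add_sum_bound_neg[of a b] unfolding M_def by simp
    then have "\<pi>\<^sub>1 (a + b) \<le> \<sigma> (d * E) M" using P1delta_add_le_neg unfolding M_def by simp
    then show ?thesis
      using sigma_reaches_within \<open>M \<le> \<pi>\<^sub>1 (a + b)\<close> P1delta_mem_neg(2) unfolding M_def
      by (simp add: max_def)
  qed
  then show ?thesis by blast
qed

end

lemma P1delta_shift_bound:
  "\<exists>\<Lambda>::nat. \<forall>s t x :: int.
     ((opPos R (As ! 0) \<and> s \<le> t \<and> t < x - Inf (F ` tuples)) \<or>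
      (opNeg R (As ! 0) \<and> s \<ge> t \<and> t > x - Sup (F ` tuples))) \<longrightarrow>
     ((\<exists>\<delta>\<le>\<Lambda>. \<pi>\<^sub>1 (x - s) = \<sigma> \<delta> (\<pi>\<^sub>1 (x - t))) \<or> (\<exists>\<epsilon>\<le>\<Lambda>. \<pi>\<^sub>1 (x - s) = \<sigma> \<epsilon> (\<pi>\<^sub>1 (t - s))))"
proof -
  obtain \<Lambda> where \<Lambda>: "\<forall>a b. (opPos R (As ! 0) \<and> 0 \<le> b \<and> Inf (F ` tuples) < a) \<or>
      (opNeg R (As ! 0) \<and> b \<le> 0 \<and> a < Sup (F ` tuples)) \<longrightarrow>
      (\<exists>k\<le>\<Lambda>. \<pi>\<^sub>1 (a + b) = \<sigma> k (max (\<pi>\<^sub>1 a) (\<pi>\<^sub>1 b)))"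
  proof (cases "opPos R (As ! 0)")
    case True
    then show ?thesis using that P1delta_add_pos not_opPos_and_opNeg by blast
  next
    case False
    then show ?thesis using that P1delta_add_neg by blast
  qed
  show ?thesis
  proof (intro exI[of _ \<Lambda>] allI impI)
    fix s t x :: int
    assume "(opPos R (As ! 0) \<and> s \<le> t \<and> t < x - Inf (F ` tuples)) \<or>
      (opNeg R (As ! 0) \<and> s \<ge> t \<and> t > x - Sup (F ` tuples))"
    then have "(opPos R (As ! 0) \<and> 0 \<le> t - s \<and> Inf (F ` tuples) < x - t) \<or>
        (opNeg R (As ! 0) \<and> t - s \<le> 0 \<and> x - t < Sup (F ` tuples))"
      by auto
    then have "\<exists>k\<le>\<Lambda>. \<pi>\<^sub>1 (x - t + (t - s)) = \<sigma> k (max (\<pi>\<^sub>1 (x - t)) (\<pi>\<^sub>1 (t - s)))"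
      using \<Lambda> by blast
    then obtain k where k: "k \<le> \<Lambda>" "\<pi>\<^sub>1 (x - s) = \<sigma> k (max (\<pi>\<^sub>1 (x - t)) (\<pi>\<^sub>1 (t - s)))"
      by auto
    consider "max (\<pi>\<^sub>1 (x - t)) (\<pi>\<^sub>1 (t - s)) = \<pi>\<^sub>1 (x - t)"
      | "max (\<pi>\<^sub>1 (x - t)) (\<pi>\<^sub>1 (t - s)) = \<pi>\<^sub>1 (t - s)"
      by linarith
    then show "(\<exists>\<delta>\<le>\<Lambda>. \<pi>\<^sub>1 (x - s) = \<sigma> \<delta> (\<pi>\<^sub>1 (x - t))) \<or> (\<exists>\<epsilon>\<le>\<Lambda>. \<pi>\<^sub>1 (x - s) = \<sigma> \<epsilon> (\<pi>\<^sub>1 (t - s)))"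
      by cases (metis k)+
  qed
qed

end

context sparse_pred
begin

lemma eventually_large_delta:
  assumes sub: "sub_d Rt d R" and d: "1 \<le> d" and ne: "As \<noteq> []"
    and nz: "\<forall>i<length As. \<not> opZero R (As ! i)"
  shows "\<forall>\<^sub>F D in sequentially. d dvd D \<longrightarrow> large_delta R Rt d As D"
proof -
  have Rt: "Rt \<subseteq> R" using sub_d_subset[OF sub] .
  have nz0: "\<not> opZero R (As ! 0)" using nz ne by simp
  obtain T where T: "\<forall>x\<in>R. \<forall>y\<in>R. T \<le> x \<longrightarrow> x < y \<longrightarrow>
      opApp R (abs_op R (As ! 0)) x < opApp R (abs_op R (As ! 0)) y"
    using opPos_eventually_strict_mono[OF opPos_abs_op[OF nz0]] by blast
  have "\<forall>\<^sub>F D in sequentially. \<forall>x\<in>R. \<forall>y\<in>R. D \<le> x \<longrightarrow> x < y \<longrightarrow>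
      opApp R (abs_op R (As ! 0)) x < opApp R (abs_op R (As ! 0)) y"
    unfolding eventually_sequentially using T by (meson order_trans)
  with eventually_dotA_lex_sign[OF Rt nz] eventually_dotA_near_head[OF Rt ne nz0]
  show ?thesis
  proof eventually_elim
    case (elim D)
    show ?case by (intro impI, unfold_locales) (use elim sub d ne nz0 infinite_R sparse_R in auto)
  qed
qed

end

theorem mainTheorem15:
  fixes R Rt :: "nat set" and d n :: nat and As :: "int list list"
  assumes "infinite R" and "cong_periodic R" and "sparse R"
    and "d \<ge> 1" and "sub_d Rt d R"
    and "n \<ge> 1" and "length As = n" and "\<forall>i<n. \<not> opZero R (As ! i)"
  shows "\<exists>D0. \<forall>D. D \<ge> D0 \<and> d dvd D \<longrightarrow>
    (\<exists>\<Lambda>::nat. \<forall>s t x :: int.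
       ((opPos R (As ! 0) \<and> s \<le> t \<and> t < x - Inf (dotA R As ` tupSet R Rt n D)) \<or>
        (opNeg R (As ! 0) \<and> s \<ge> t \<and> t > x - Sup (dotA R As ` tupSet R Rt n D)))
       \<longrightarrow>
       ((\<exists>\<delta>\<le>\<Lambda>. P1delta R Rt As D (x - s) = (succR R ^^ \<delta>) (P1delta R Rt As D (x - t))) \<or>
        (\<exists>\<epsilon>\<le>\<Lambda>. P1delta R Rt As D (x - s) = (succR R ^^ \<epsilon>) (P1delta R Rt As D (t - s)))))"
proof -
  interpret sparse_pred R using assms(1,3) by unfold_locales
  have "As \<noteq> []" using assms(6,7) by auto
  then have "\<forall>\<^sub>F D in sequentially. d dvd D \<longrightarrow> large_delta R Rt d As D"
    using eventually_large_delta[OF assms(5,4)] assms(7,8) by blast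
  then obtain D0 where D0: "\<forall>D\<ge>D0. d dvd D \<longrightarrow> large_delta R Rt d As D"
    unfolding eventually_sequentially by blast
  show ?thesis
  proof (rule exI[of _ D0], intro allI impI)
    fix D assume "D0 \<le> D \<and> d dvd D"
    then interpret large_delta R Rt d As D using D0 by blast
    show "\<exists>\<Lambda>::nat. \<forall>s t x :: int.
       ((opPos R (As ! 0) \<and> s \<le> t \<and> t < x - Inf (dotA R As ` tupSet R Rt n D)) \<or>
        (opNeg R (As ! 0) \<and> s \<ge> t \<and> t > x - Sup (dotA R As ` tupSet R Rt n D)))
       \<longrightarrow>
       ((\<exists>\<delta>\<le>\<Lambda>. P1delta R Rt As D (x - s) = (succR R ^^ \<delta>) (P1delta R Rt As D (x - t))) \<or>
        (\<exists>\<epsilon>\<le>\<Lambda>. P1delta R Rt As D (x - s) = (succR R ^^ \<epsilon>) (P1delta R Rt As D (t - s))))"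
      using P1delta_shift_bound assms(7) by simp
  qed
qed

end
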